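(* Let $\{P_t\}_{t\geq 0}$ be a Markov--Feller semigroup on a Polish space $\mathcal{X}$ which is Ces\`aro eventually continuous at every point of $\mathcal{X}$. Then for any two distinct ergodic measures $\mu$ and $\nu$ of $\{P_t\}_{t\geq 0}$, $\operatorname{supp}\mu\cap\operatorname{supp}\nu=\emptyset$.
   Context: $(\mathcal{X},\rho)$ is a Polish space. A Markov--Feller semigroup $\{P_t\}_{t\ge0}$ is a semigroup of mass-preserving positively linear operators on finite Borel measures, each with a dual linear operator on bounded Borel functions ($\langle f,P_t\mu\rangle=\langle P_tf,\mu\rangle$) preserving bounded continuous functions. $Q_tf(x)=\frac1t\int_0^tP_sf(x)\,ds$ for $t>0$. Ergodic measure: ergodic invariant probability measure. Ces\`aro eventually continuous at $z$: for every bounded Lipschitz $f$, $\limsup_{x\to z}\limsup_{t\to\infty}|Q_tf(x)-Q_tf(z)|=0$. *)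

theory Defs
  imports "HOL-Analysis.Analysis" "HOL-Probability.Probability"
begin

text \<open>A Markov--Feller semigroup on a Polish space is represented by its transition
  kernel K t x = P_t delta_x (a Borel probability measure).\<close>

definition Pf :: "(real \<Rightarrow> 'a::topological_space \<Rightarrow> 'a measure) \<Rightarrow> real \<Rightarrow> ('a \<Rightarrow> real) \<Rightarrow> 'a \<Rightarrow> real" where
  "Pf K t f x = (\<integral>y. f y \<partial>(K t x))"

definition Pmu :: "(real \<Rightarrow> 'a::topological_space \<Rightarrow> 'a measure) \<Rightarrow> real \<Rightarrow> 'a measure \<Rightarrow> 'a measure" where
  "Pmu K t \<mu> = \<mu> \<bind> K t"

definition bcont :: "('a::topological_space \<Rightarrow> real) \<Rightarrow> bool" where
  "bcont f \<longleftrightarrow> continuous_on UNIV f \<and> bounded (range f)"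

definition markov_feller :: "(real \<Rightarrow> 'a::metric_space \<Rightarrow> 'a measure) \<Rightarrow> bool" where
  "markov_feller K \<longleftrightarrow>
     (\<forall>t\<ge>0. K t \<in> borel \<rightarrow>\<^sub>M prob_algebra borel) \<and>
     (\<forall>x. K 0 x = return borel x) \<and>
     (\<forall>s\<ge>0. \<forall>t\<ge>0. \<forall>x. K (s + t) x = Pmu K t (K s x)) \<and>
     (\<forall>t\<ge>0. \<forall>f. bcont f \<longrightarrow> bcont (Pf K t f)) \<and>
     (\<forall>f x. bcont f \<longrightarrow>
        (\<lambda>s. Pf K s f x) \<in> borel_measurable (restrict_space lborel {0..}))"

definition Qf :: "(real \<Rightarrow> 'a::topological_space \<Rightarrow> 'a measure) \<Rightarrow> real \<Rightarrow> ('a \<Rightarrow> real) \<Rightarrow> 'a \<Rightarrow> real" where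
  "Qf K t f x = (1 / t) * (LBINT s=0..t. Pf K s f x)"

definition bounded_lipschitz :: "('a::metric_space \<Rightarrow> real) \<Rightarrow> bool" where
  "bounded_lipschitz f \<longleftrightarrow> bounded (range f) \<and> (\<exists>L. L-lipschitz_on UNIV f)"

text \<open>limsup_{x -> z} limsup_{t -> oo} |Q_t f x - Q_t f z| = 0, in epsilon-delta form.\<close>
definition cesaro_ev_cont :: "(real \<Rightarrow> 'a::metric_space \<Rightarrow> 'a measure) \<Rightarrow> 'a \<Rightarrow> bool" where
  "cesaro_ev_cont K z \<longleftrightarrow>
     (\<forall>f. bounded_lipschitz f \<longrightarrow>
        (\<forall>e>0. \<exists>d>0. \<forall>x. dist x z < d \<longrightarrow>
           Limsup at_top (\<lambda>t. ereal \<bar>Qf K t f x - Qf K t f z\<bar>) \<le> ereal e))"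

definition invariant_prob :: "(real \<Rightarrow> 'a::topological_space \<Rightarrow> 'a measure) \<Rightarrow> 'a measure \<Rightarrow> bool" where
  "invariant_prob K \<mu> \<longleftrightarrow> sets \<mu> = sets borel \<and> prob_space \<mu> \<and> (\<forall>t\<ge>0. Pmu K t \<mu> = \<mu>)"

definition ergodic :: "(real \<Rightarrow> 'a::topological_space \<Rightarrow> 'a measure) \<Rightarrow> 'a measure \<Rightarrow> bool" where
  "ergodic K \<mu> \<longleftrightarrow> invariant_prob K \<mu> \<and>
     (\<forall>A\<in>sets borel. (\<forall>t\<ge>0. AE x in \<mu>. Pf K t (indicator A) x = indicator A x)
        \<longrightarrow> measure \<mu> A = 0 \<or> measure \<mu> A = 1)"

definition supp :: "'a::metric_space measure \<Rightarrow> 'a set" where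
  "supp \<mu> = {x. \<forall>e>0. emeasure \<mu> (ball x e) > 0}"

end

theory Submission
  imports Defs
begin

text \<open>Fix z in both supports and a bounded Lipschitz f. The Cesaro oscillation
  H y = limsup_n |Q_n f y - Q_n f z| is bounded, measurable and subharmonic (H \<le> P_s H),
  because P_s commutes with Q_n up to an error O(s/n). For an invariant measure \<mu>, a bounded
  subharmonic function is \<mu>-a.e. harmonic, so the positivity set of (H - c)^+ is invariant;
  ergodicity gives it \<mu>-measure 0 or 1, and eventual continuity at z makes it miss a ball
  around z, which has positive \<mu>-measure. Hence H = 0 \<mu>-a.e., and integrating the invariance
  identity \<integral> Q_n f d\<mu> = \<integral> f d\<mu> yields Q_n f z \<longlonglongrightarrow> \<integral> f d\<mu>. The same limit is \<integral> f d\<nu>, and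
  bounded Lipschitz functions determine a Borel probability measure, so \<mu> = \<nu>.\<close>

lemma borel_measurable_caratheodory:
  fixes g :: "'b \<Rightarrow> 'a::{metric_space,second_countable_topology} \<Rightarrow> real"
  assumes meas: "\<And>y. (\<lambda>s. g s y) \<in> borel_measurable M"
    and cont: "\<And>s. continuous_on UNIV (g s)"
  shows "(\<lambda>p. g (snd p) (fst p)) \<in> borel_measurable (borel \<Otimes>\<^sub>M M)"
proof -
  obtain D :: "'a set" where D: "countable D" "\<And>X. open X \<Longrightarrow> X \<noteq> {} \<Longrightarrow> \<exists>d\<in>D. d \<in> X"
    using countable_dense_exists by blast
  have "D \<noteq> {}" using D(2)[of UNIV] by auto
  define d where "d = from_nat_into D"
  have "range d = D" unfolding d_def using D(1) \<open>D \<noteq> {}\<close> by simp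
  then have dense: "\<exists>i. dist y (d i) < r" if "r > 0" for y r
    using D(2)[of "ball y r"] that by (auto simp: dist_commute)
  \<comment> \<open>Snapping the space variable to the dense sequence turns each approximant into a
    countable patchwork of the measurable sections \<open>g s (d i)\<close>.\<close>
  define idx where "idx k y = (LEAST i. dist y (d i) < 1 / Suc k)" for k y
  have idx: "dist y (d (idx k y)) < 1 / Suc k" for k y
    unfolding idx_def by (rule LeastI_ex) (rule dense, simp)
  define u where "u k p = g (snd p) (d (idx k (fst p)))" for k p
  have u_measurable: "u k \<in> borel_measurable (borel \<Otimes>\<^sub>M M)" for k
  proof -
    have "(\<lambda>p. g (snd p) (d i)) \<in> borel_measurable (borel \<Otimes>\<^sub>M M)" for i
      by (rule measurable_compose[OF measurable_snd meas])
    moreover have "(\<lambda>p. idx k (fst p)) \<in> borel \<Otimes>\<^sub>M M \<rightarrow>\<^sub>M count_space UNIV"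
      unfolding idx_def by measurable
    ultimately show ?thesis
      unfolding u_def by (rule measurable_compose_countable'[where f="\<lambda>i p. g (snd p) (d i)"]) auto
  qed
  show ?thesis
  proof (rule borel_measurable_LIMSEQ_real[OF _ u_measurable])
    fix p :: "'a \<times> 'b"
    have "(\<lambda>k. d (idx k (fst p))) \<longlonglongrightarrow> fst p"
    proof (rule tendsto_dist_iff[THEN iffD2], rule Lim_null_comparison)
      show "\<forall>\<^sub>F k in sequentially. norm (dist (d (idx k (fst p))) (fst p)) \<le> 1 / Suc k"
        using idx by (auto simp: dist_commute less_imp_le)
      show "(\<lambda>k. 1 / real (Suc k)) \<longlonglongrightarrow> 0"
        by (rule LIMSEQ_inverse_real_of_nat[unfolded inverse_eq_divide])
    qed
    moreover have "isCont (g (snd p)) (fst p)"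
      using cont by (simp add: continuous_on_eq_continuous_at)
    ultimately show "(\<lambda>k. u k p) \<longlonglongrightarrow> g (snd p) (fst p)"
      unfolding u_def by (rule isCont_tendsto_compose[rotated])
  qed
qed

lemma measurable_sets_borel:
  "sets M = sets borel \<Longrightarrow> f \<in> borel \<rightarrow>\<^sub>M N \<Longrightarrow> f \<in> M \<rightarrow>\<^sub>M N"
  by (simp cong: measurable_cong_sets)

lemma bounded_borel_integrable:
  fixes f :: "'a::topological_space \<Rightarrow> real"
  assumes "prob_space M" "sets M = sets borel" "f \<in> borel_measurable borel" "\<And>x. \<bar>f x\<bar> \<le> B"
  shows "integrable M f"
proof -
  interpret prob_space M by fact
  show ?thesis
    using assms(2-4) by (intro integrable_const_bound[where B=B]) (auto simp: measurable_sets_borel)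
qed

lemma abs_integral_le_bound:
  fixes f :: "'a \<Rightarrow> real"
  assumes "prob_space M" "integrable M f" "\<And>x. \<bar>f x\<bar> \<le> B"
  shows "\<bar>\<integral>x. f x \<partial>M\<bar> \<le> B"
proof -
  interpret prob_space M by fact
  have "f x \<le> B" "-B \<le> f x" for x using assms(3)[of x] by auto
  then have "(\<integral>x. f x \<partial>M) \<le> B" "-B \<le> (\<integral>x. f x \<partial>M)"
    using assms(2) by (auto intro!: integral_le_const integral_ge_const)
  then show ?thesis by auto
qed

lemma AE_le_0_if_AE_le_pos:
  fixes g :: "'a \<Rightarrow> real"
  assumes "\<And>c. c > 0 \<Longrightarrow> AE x in M. g x \<le> c"
  shows "AE x in M. g x \<le> 0"
proof -
  have "AE x in M. \<forall>k::nat. g x \<le> 1 / Suc k"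
    using assms by (subst AE_all_countable) simp
  then show ?thesis
  proof eventually_elim
    case (elim x)
    show "g x \<le> 0"
    proof (rule field_le_epsilon)
      fix e :: real assume "0 < e"
      then obtain k where "1 / real (Suc k) < e" by (rule nat_approx_posE)
      then show "g x \<le> 0 + e" using elim[rule_format, of k] by simp
    qed
  qed
qed

lemma integrable_indicator_times_bounded:
  fixes \<phi> :: "real \<Rightarrow> real"
  assumes "\<phi> \<in> borel_measurable lborel" "\<And>r. \<bar>\<phi> r\<bar> \<le> B"
  shows "integrable lborel (\<lambda>r. indicator {a..b} r * \<phi> r)"
proof (rule Bochner_Integration.integrable_bound[where f="\<lambda>r. B * indicator {a..b} r"])
  have "emeasure lborel {a..b} < \<infinity>" by (cases "a \<le> b") auto
  then show "integrable lborel (\<lambda>r. B * indicator {a..b} r)" by simp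
  show "(\<lambda>r. indicator {a..b} r * \<phi> r) \<in> borel_measurable lborel" using assms(1) by measurable
  show "AE x in lborel. norm (indicator {a..b} x * \<phi> x) \<le> norm (B * indicator {a..b} x :: real)"
  proof (intro AE_I2)
    fix x
    have "\<bar>\<phi> x\<bar> \<le> \<bar>B\<bar>" using assms(2)[of x] by linarith
    then show "norm (indicator {a..b} x * \<phi> x) \<le> norm (B * indicator {a..b} x :: real)"
      by (auto split: split_indicator)
  qed
qed

lemma abs_integral_shift_diff_le:
  fixes \<phi> :: "real \<Rightarrow> real"
  assumes \<phi>: "\<phi> \<in> borel_measurable lborel" "\<And>r. \<bar>\<phi> r\<bar> \<le> B" and "s \<ge> 0" "t \<ge> 0"
  shows "\<bar>(\<integral>r. indicator {0..t} r * \<phi> (s + r) \<partial>lborel) - (\<integral>r. indicator {0..t} r * \<phi> r \<partial>lborel)\<bar>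
    \<le> 2 * s * B"
proof -
  have "B \<ge> 0" using \<phi>(2)[of 0] by linarith
  have "(\<integral>r. indicator {s..s+t} r * \<phi> r \<partial>lborel)
      = \<bar>1\<bar> *\<^sub>R (\<integral>x. indicator {s..s+t} (s + 1 * x) * \<phi> (s + 1 * x) \<partial>lborel)"
    by (rule lborel_integral_real_affine) simp
  also have "\<dots> = (\<integral>r. indicator {0..t} r * \<phi> (s + r) \<partial>lborel)"
    by (auto intro!: Bochner_Integration.integral_cong split: split_indicator)
  finally have shift: "(\<integral>r. indicator {0..t} r * \<phi> (s + r) \<partial>lborel)
      = (\<integral>r. indicator {s..s+t} r * \<phi> r \<partial>lborel)" by simp
  have i1: "integrable lborel (\<lambda>r. indicator {s..s+t} r * \<phi> r)"
   and i2: "integrable lborel (\<lambda>r. indicator {0..t} r * \<phi> r)"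
    by (rule integrable_indicator_times_bounded[OF \<phi>])+
  have "\<bar>(\<integral>r. indicator {s..s+t} r * \<phi> r \<partial>lborel) - (\<integral>r. indicator {0..t} r * \<phi> r \<partial>lborel)\<bar>
      = \<bar>\<integral>r. indicator {s..s+t} r * \<phi> r - indicator {0..t} r * \<phi> r \<partial>lborel\<bar>"
    using i1 i2 by simp
  also have "\<dots> \<le> (\<integral>r. B * indicator {0..s} r + B * indicator {t..t+s} r \<partial>lborel)"
  proof (rule integral_abs_bound_integral)
    show "integrable lborel (\<lambda>r. indicator {s..s+t} r * \<phi> r - indicator {0..t} r * \<phi> r)"
      using i1 i2 by simp
    show "integrable lborel (\<lambda>r. B * indicator {0..s} r + B * indicator {t..t+s} r :: real)"
      using assms(3) by (intro Bochner_Integration.integrable_add integrable_mult_right integrable_real_indicator) auto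
    show "\<bar>indicator {s..s+t} r * \<phi> r - indicator {0..t} r * \<phi> r\<bar>
        \<le> B * indicator {0..s} r + B * indicator {t..t+s} r" for r
      using \<phi>(2)[of r] \<open>B \<ge> 0\<close> assms(3,4) by (auto split: split_indicator)
  qed
  also have "\<dots> = 2 * s * B" using assms(3,4) by simp
  finally show ?thesis using shift by simp
qed

lemma bcont_borel_measurable: "bcont f \<Longrightarrow> f \<in> borel_measurable borel"
  by (simp add: bcont_def borel_measurable_continuous_onI)

lemma bcont_abs_bound:
  assumes "bcont f"
  obtains B where "B \<ge> 0" "\<And>y. \<bar>f y\<bar> \<le> B"
proof -
  from assms obtain B where "\<And>y. norm (f y) \<le> B" by (auto simp: bcont_def bounded_iff)
  then show ?thesis using that[of B] by (metis abs_ge_zero order_trans real_norm_def)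
qed

lemma bounded_lipschitz_imp_bcont: "bounded_lipschitz f \<Longrightarrow> bcont f"
  unfolding bounded_lipschitz_def bcont_def using lipschitz_on_continuous_on by blast

lemma bounded_lipschitz_infdist_cutoff:
  "bounded_lipschitz (\<lambda>x. max 0 (1 - real (Suc k) * infdist x F))"
  unfolding bounded_lipschitz_def
proof
  have "norm (max 0 (1 - real (Suc k) * infdist x F)) \<le> 1" for x
    using infdist_nonneg[of x F] by auto
  then show "bounded (range (\<lambda>x. max 0 (1 - real (Suc k) * infdist x F)))"
    by (blast intro: boundedI)
  have "dist (max 0 (1 - real (Suc k) * infdist x F)) (max 0 (1 - real (Suc k) * infdist y F))
      \<le> real (Suc k) * dist x y" for x y
  proof -
    have "dist (max 0 (1 - real (Suc k) * infdist x F)) (max 0 (1 - real (Suc k) * infdist y F))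
        \<le> \<bar>real (Suc k) * infdist x F - real (Suc k) * infdist y F\<bar>"
      by (auto simp: dist_real_def max_def)
    also have "\<dots> = real (Suc k) * \<bar>infdist x F - infdist y F\<bar>"
      by (simp add: abs_mult right_diff_distrib[symmetric])
    also have "\<dots> \<le> real (Suc k) * dist x y"
      by (intro mult_left_mono infdist_triangle_abs) simp
    finally show ?thesis .
  qed
  then show "\<exists>L. L-lipschitz_on UNIV (\<lambda>x. max 0 (1 - real (Suc k) * infdist x F))"
    by (intro exI lipschitz_onI) auto
qed

lemma infdist_cutoff_tendsto_indicator:
  assumes "closed F" "F \<noteq> {}"
  shows "(\<lambda>k. max 0 (1 - real (Suc k) * infdist x F)) \<longlonglongrightarrow> indicator F x"
proof (cases "x \<in> F")
  case True
  then show ?thesis by simp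
next
  case False
  then have pos: "infdist x F > 0" by (rule infdist_pos_not_in_closed[OF assms])
  then obtain N where N: "1 < real (Suc N) * infdist x F"
    using reals_Archimedean[OF pos] by (auto simp: field_simps)
  have "eventually (\<lambda>k. 1 < real (Suc k) * infdist x F) sequentially"
    using eventually_ge_at_top[of N]
    by eventually_elim (use N pos in \<open>smt (verit) mult_right_mono of_nat_Suc of_nat_mono\<close>)
  then have "eventually (\<lambda>k. max 0 (1 - real (Suc k) * infdist x F) = 0) sequentially"
    by eventually_elim simp
  then show ?thesis using False by (simp add: tendsto_eventually)
qed

lemma integral_infdist_cutoff_tendsto_measure:
  assumes F: "closed F" "F \<noteq> {}" and M: "sets M = sets borel" "prob_space M"
  shows "(\<lambda>k. \<integral>x. max 0 (1 - real (Suc k) * infdist x F) \<partial>M) \<longlonglongrightarrow> measure M F"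
proof -
  interpret prob_space M by (rule M(2))
  have "(\<lambda>k. \<integral>x. max 0 (1 - real (Suc k) * infdist x F) \<partial>M) \<longlonglongrightarrow> (\<integral>x. indicator F x \<partial>M)"
  proof (rule integral_dominated_convergence[where w="\<lambda>_. 1"])
    show "(indicator F :: 'a \<Rightarrow> real) \<in> borel_measurable M"
      using F(1) M(1) by (simp add: borel_closed measurable_sets_borel)
    show "(\<lambda>x. max 0 (1 - real (Suc k) * infdist x F)) \<in> borel_measurable M" for k
      using bounded_lipschitz_infdist_cutoff
      by (intro measurable_sets_borel[OF M(1)] bcont_borel_measurable bounded_lipschitz_imp_bcont)
    show "AE x in M. (\<lambda>k. max 0 (1 - real (Suc k) * infdist x F)) \<longlonglongrightarrow> indicator F x"
      using infdist_cutoff_tendsto_indicator[OF F] by simp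
    show "AE x in M. norm (max 0 (1 - real (Suc k) * infdist x F)) \<le> 1" for k
      using infdist_nonneg by (intro AE_I2) (simp add: zero_le_mult_iff)
  qed simp
  moreover have "space M = UNIV" using M(1) sets_eq_imp_space_eq by fastforce
  ultimately show ?thesis by simp
qed

lemma measure_eq_if_integral_bounded_lipschitz_eq:
  fixes \<mu> \<nu> :: "'a::metric_space measure"
  assumes sets: "sets \<mu> = sets borel" "sets \<nu> = sets borel"
    and prob: "prob_space \<mu>" "prob_space \<nu>"
    and eq: "\<And>f. bounded_lipschitz f \<Longrightarrow> (\<integral>x. f x \<partial>\<mu>) = (\<integral>x. f x \<partial>\<nu>)"
  shows "\<mu> = \<nu>"
proof -
  have closed_eq: "emeasure \<mu> F = emeasure \<nu> F" if "closed F" for F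
  proof (cases "F = {}")
    case False
    have "(\<lambda>k. \<integral>x. max 0 (1 - real (Suc k) * infdist x F) \<partial>\<mu>)
        = (\<lambda>k. \<integral>x. max 0 (1 - real (Suc k) * infdist x F) \<partial>\<nu>)"
      by (intro ext eq bounded_lipschitz_infdist_cutoff)
    then have "measure \<mu> F = measure \<nu> F"
      using integral_infdist_cutoff_tendsto_measure[OF that False sets(1) prob(1)]
        integral_infdist_cutoff_tendsto_measure[OF that False sets(2) prob(2)]
      by (metis LIMSEQ_unique)
    then show ?thesis
      using prob by (simp add: prob_space_def finite_measure.emeasure_eq_measure)
  qed simp
  show ?thesis
  proof (rule measure_eqI_generator_eq[where E="Collect closed" and \<Omega>=UNIV and A="\<lambda>_. UNIV"])
    have "sets (borel :: 'a measure) = sigma_sets UNIV (Collect closed)"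
      unfolding borel_eq_closed by (rule sets_measure_of) simp
    then show "sets \<mu> = sigma_sets UNIV (Collect closed)" "sets \<nu> = sigma_sets UNIV (Collect closed)"
      using sets by auto
    show "emeasure \<mu> UNIV \<noteq> \<infinity>" for i :: nat
      using prob(1) by (simp add: prob_space_def finite_measure.emeasure_eq_measure)
  qed (auto simp: Int_stable_def closed_eq)
qed

section \<open>Markov--Feller semigroups and Cesaro averages\<close>

lemma invariant_probD:
  assumes "invariant_prob K \<mu>"
  shows "sets \<mu> = sets borel" "prob_space \<mu>" "\<And>s. s \<ge> 0 \<Longrightarrow> \<mu> \<bind> K s = \<mu>"
  using assms unfolding invariant_prob_def Pmu_def by auto

lemma ergodic_imp_invariant_prob: "ergodic K \<mu> \<Longrightarrow> invariant_prob K \<mu>"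
  by (simp add: ergodic_def)

text \<open>The redundant factor \<open>indicator {0..}\<close> makes the integrand Borel in s on the whole
  line, whereas \<open>Pf K s f y\<close> is only known to be measurable for s \<ge> 0.\<close>
lemma Qf_eq_integral_lborel:
  assumes "0 \<le> t"
  shows "Qf K t f y = (1/t) * (\<integral>s. indicator {0..t} s * (indicator {0..} s * Pf K s f y) \<partial>lborel)"
proof -
  have "Qf K t f y = (1/t) * (\<integral>s. indicator {0..t} s * Pf K s f y \<partial>lborel)"
    using assms by (simp add: Qf_def interval_integral_Icc set_lebesgue_integral_def zero_ereal_def)
  also have "(\<lambda>s. indicator {0..t} s * Pf K s f y)
      = (\<lambda>s. indicator {0..t} s * (indicator {0..} s * Pf K s f y))"
    by (auto simp: fun_eq_iff split: split_indicator)
  finally show ?thesis .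
qed

locale markov_feller_semigroup =
  fixes K :: "real \<Rightarrow> 'a::polish_space \<Rightarrow> 'a measure"
  assumes markov_feller: "markov_feller K"
begin

lemma kernel_measurable: "t \<ge> 0 \<Longrightarrow> K t \<in> borel \<rightarrow>\<^sub>M prob_algebra borel"
  using markov_feller by (simp add: markov_feller_def)

lemma prob_space_kernel: "t \<ge> 0 \<Longrightarrow> prob_space (K t x)"
  and sets_kernel: "t \<ge> 0 \<Longrightarrow> sets (K t x) = sets borel"
  using measurable_space[OF kernel_measurable, of t x] by (auto simp: space_prob_algebra)

lemma kernel_subprob_measurable: "t \<ge> 0 \<Longrightarrow> K t \<in> borel \<rightarrow>\<^sub>M subprob_algebra borel"
  by (rule measurable_prob_algebraD[OF kernel_measurable])

lemma bind_kernel: "s \<ge> 0 \<Longrightarrow> t \<ge> 0 \<Longrightarrow> K s x \<bind> K t = K (s + t) x"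
  using markov_feller by (simp add: markov_feller_def Pmu_def)

lemma bcont_Pf: "t \<ge> 0 \<Longrightarrow> bcont f \<Longrightarrow> bcont (Pf K t f)"
  using markov_feller by (simp add: markov_feller_def)

lemma Pf_time_measurable:
  assumes "bcont f"
  shows "(\<lambda>s. indicator {0..} s * Pf K s f x) \<in> borel_measurable lborel"
proof -
  have "(\<lambda>s. Pf K s f x) \<in> borel_measurable (restrict_space lborel {0..})"
    using markov_feller assms by (simp add: markov_feller_def)
  then show ?thesis by (subst (asm) borel_measurable_restrict_space_iff) auto
qed

lemma integrable_kernel:
  fixes f :: "'a \<Rightarrow> real"
  assumes "t \<ge> 0" "f \<in> borel_measurable borel" "\<And>y. \<bar>f y\<bar> \<le> B"
  shows "integrable (K t x) f"
  by (rule bounded_borel_integrable[OF prob_space_kernel[OF assms(1)] sets_kernel[OF assms(1)] assms(2,3)])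

lemma abs_Pf_le:
  assumes "t \<ge> 0" "f \<in> borel_measurable borel" "\<And>y. \<bar>f y\<bar> \<le> B"
  shows "\<bar>Pf K t f x\<bar> \<le> B"
  unfolding Pf_def
  by (rule abs_integral_le_bound[OF prob_space_kernel[OF assms(1)] integrable_kernel[OF assms] assms(3)])

lemma borel_measurable_Pf:
  "t \<ge> 0 \<Longrightarrow> f \<in> borel_measurable borel \<Longrightarrow> Pf K t f \<in> borel_measurable borel"
  unfolding Pf_def
  by (rule measurable_compose[OF kernel_subprob_measurable integral_measurable_subprob_algebra])

lemma integral_Pf:
  fixes f :: "'a \<Rightarrow> real"
  assumes "t \<ge> 0" "prob_space \<rho>" "sets \<rho> = sets borel"
    and "f \<in> borel_measurable borel" "\<And>y. \<bar>f y\<bar> \<le> B"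
  shows "(\<integral>y. Pf K t f y \<partial>\<rho>) = (\<integral>w. f w \<partial>(\<rho> \<bind> K t))"
proof -
  have "(\<integral>w. f w \<partial>(\<rho> \<bind> K t)) = (\<integral>y. (\<integral>w. f w \<partial>K t y) \<partial>\<rho>)"
  proof (rule integral_bind[where B=B and B'=1])
    show "K t \<in> \<rho> \<rightarrow>\<^sub>M subprob_algebra borel"
      using assms(1,3) by (simp add: kernel_subprob_measurable measurable_sets_borel)
    show "finite_measure \<rho>" using assms(2) by (simp add: prob_space_def)
    show "AE x in \<rho>. emeasure (K t x) (space (K t x)) \<le> ennreal 1"
      using assms(1) by (simp add: prob_space.emeasure_space_1[OF prob_space_kernel])
  qed (use assms(4,5) in auto)
  then show ?thesis unfolding Pf_def by simp
qed

lemma integral_kernel_Pf: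
  assumes "s \<ge> 0" "t \<ge> 0" "f \<in> borel_measurable borel" "\<And>y. \<bar>f y\<bar> \<le> B"
  shows "(\<integral>w. Pf K t f w \<partial>K s x) = Pf K (s + t) f x"
  using integral_Pf[OF assms(2) prob_space_kernel sets_kernel assms(3,4)] assms(1,2)
  by (simp add: bind_kernel Pf_def)

lemma integral_Pf_invariant:
  assumes "invariant_prob K \<mu>" "t \<ge> 0" "f \<in> borel_measurable borel" "\<And>y. \<bar>f y\<bar> \<le> B"
  shows "(\<integral>y. Pf K t f y \<partial>\<mu>) = (\<integral>y. f y \<partial>\<mu>)"
  using integral_Pf[OF assms(2) invariant_probD(2,1)[OF assms(1)] assms(3,4)]
    invariant_probD(3)[OF assms(1,2)] by simp

lemma Pf_joint_measurable:
  assumes "bcont f"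
  shows "(\<lambda>p. indicator {0..} (snd p) * Pf K (snd p) f (fst p)) \<in> borel_measurable (borel \<Otimes>\<^sub>M lborel)"
proof (rule borel_measurable_caratheodory[where g="\<lambda>s y. indicator {0..} s * Pf K s f y"])
  show "(\<lambda>s. indicator {0..} s * Pf K s f y) \<in> borel_measurable lborel" for y
    by (rule Pf_time_measurable[OF assms])
  show "continuous_on UNIV (\<lambda>y. indicator {0..} s * Pf K s f y)" for s :: real
  proof (cases "s \<ge> 0")
    case True
    then show ?thesis using bcont_Pf[OF True assms] by (intro continuous_intros) (simp add: bcont_def)
  qed simp
qed

lemma abs_indicator_Pf_le:
  assumes "bcont f" "\<And>y. \<bar>f y\<bar> \<le> B"
  shows "\<bar>indicator {0..} r * Pf K r f x\<bar> \<le> B"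
  using abs_Pf_le[OF _ bcont_borel_measurable[OF assms(1)] assms(2), of r x] assms(2)[of x]
  by (auto split: split_indicator)

lemma borel_measurable_Qf:
  assumes "bcont f" "t \<ge> 0"
  shows "Qf K t f \<in> borel_measurable borel"
proof -
  define F where "F y s = indicator {0..t} s * (indicator {0..} s * Pf K s f y)" for y s
  have "(\<lambda>p. F (fst p) (snd p)) \<in> borel_measurable (borel \<Otimes>\<^sub>M lborel)"
    unfolding F_def using Pf_joint_measurable[OF assms(1)] by measurable
  then have "(\<lambda>y. \<integral>s. F y s \<partial>lborel) \<in> borel_measurable borel"
    using lborel.borel_measurable_lebesgue_integral[of F borel] by simp
  moreover have "Qf K t f = (\<lambda>y. (1/t) * (\<integral>s. F y s \<partial>lborel))"
    using Qf_eq_integral_lborel[OF assms(2)] unfolding F_def by auto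
  ultimately show ?thesis by (simp add: borel_measurable_times)
qed

lemma abs_Qf_le:
  assumes "bcont f" "\<And>y. \<bar>f y\<bar> \<le> B" "t \<ge> 0"
  shows "\<bar>Qf K t f x\<bar> \<le> B"
proof (cases "t = 0")
  case True
  then show ?thesis using assms(2)[of x] by (simp add: Qf_def)
next
  case False
  then have "t > 0" using assms(3) by simp
  have "\<bar>\<integral>r. indicator {0..t} r * (indicator {0..} r * Pf K r f x) \<partial>lborel\<bar>
      \<le> (\<integral>r. B * indicator {0..t} r \<partial>lborel)"
  proof (rule integral_abs_bound_integral)
    show "integrable lborel (\<lambda>r. indicator {0..t} r * (indicator {0..} r * Pf K r f x))"
      by (rule integrable_indicator_times_bounded[OF Pf_time_measurable abs_indicator_Pf_le]) fact+
    show "integrable lborel (\<lambda>r. B * indicator {0..t} r :: real)"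
      using \<open>t > 0\<close> by (intro integrable_mult_right integrable_real_indicator) auto
    show "\<bar>indicator {0..t} r * (indicator {0..} r * Pf K r f x)\<bar> \<le> B * indicator {0..t} r" for r
      using abs_indicator_Pf_le[OF assms(1,2), of r x] by (auto split: split_indicator)
  qed
  also have "\<dots> = B * t" using \<open>t > 0\<close> by simp
  finally show ?thesis
    using \<open>t > 0\<close> by (simp add: Qf_eq_integral_lborel abs_mult divide_le_eq mult.commute)
qed

lemma integral_Qf:
  assumes f: "bcont f" and "t > 0" and \<rho>: "prob_space \<rho>" "sets \<rho> = sets borel"
  shows "(\<integral>y. Qf K t f y \<partial>\<rho>) = (1/t) * (\<integral>s. indicator {0..t} s * (\<integral>y. Pf K s f y \<partial>\<rho>) \<partial>lborel)"
proof -
  obtain B where B: "B \<ge> 0" "\<And>y. \<bar>f y\<bar> \<le> B" using bcont_abs_bound[OF f] by blast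
  define F where "F y s = indicator {0..t} s * (indicator {0..} s * Pf K s f y)" for y s
  interpret \<rho>: prob_space \<rho> by fact
  interpret pair_sigma_finite \<rho> lborel ..
  have "space \<rho> = UNIV" using \<rho>(2) sets_eq_imp_space_eq by fastforce
  then have sets_rect: "UNIV \<times> {0..t} \<in> sets (\<rho> \<Otimes>\<^sub>M lborel)"
    using sets.top[of \<rho>] by auto
  have "emeasure (\<rho> \<Otimes>\<^sub>M lborel) (UNIV \<times> {0..t}) = emeasure \<rho> UNIV * emeasure lborel {0..t}"
    using \<open>space \<rho> = UNIV\<close> sets.top[of \<rho>] by (intro lborel.emeasure_pair_measure_Times) auto
  then have "emeasure (\<rho> \<Otimes>\<^sub>M lborel) (UNIV \<times> {0..t}) < \<infinity>"
    using \<open>space \<rho> = UNIV\<close> \<rho>.emeasure_space_1 \<open>t > 0\<close> by (simp add: ennreal_mult_less_top)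
  then have dominating: "integrable (\<rho> \<Otimes>\<^sub>M lborel) (\<lambda>p. B * indicator (UNIV \<times> {0..t}) p)"
    using sets_rect by simp
  have "(\<lambda>p. F (fst p) (snd p)) \<in> borel_measurable (borel \<Otimes>\<^sub>M lborel)"
    unfolding F_def using Pf_joint_measurable[OF f] by measurable
  then have F_measurable: "(\<lambda>p. F (fst p) (snd p)) \<in> borel_measurable (\<rho> \<Otimes>\<^sub>M lborel)"
    by (subst measurable_cong_sets[OF sets_pair_measure_cong[OF \<rho>(2) refl] refl])
  have F_bound: "norm (F (fst p) (snd p)) \<le> norm (B * indicator (UNIV \<times> {0..t}) p)" for p
    using abs_indicator_Pf_le[OF f B(2), of "snd p" "fst p"] B(1)
    by (cases p) (auto simp: F_def split: split_indicator)
  have "integrable (\<rho> \<Otimes>\<^sub>M lborel) (\<lambda>p. F (fst p) (snd p))"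
    using F_bound by (intro Bochner_Integration.integrable_bound[OF dominating F_measurable] AE_I2)
  then have "(\<integral>y. (\<integral>s. F y s \<partial>lborel) \<partial>\<rho>) = (\<integral>s. (\<integral>y. F y s \<partial>\<rho>) \<partial>lborel)"
    by (intro Fubini_integral[symmetric]) (simp add: case_prod_beta')
  also have "(\<lambda>s. \<integral>y. F y s \<partial>\<rho>) = (\<lambda>s. indicator {0..t} s * (\<integral>y. Pf K s f y \<partial>\<rho>))"
    unfolding F_def by (auto split: split_indicator)
  finally show ?thesis
    using Qf_eq_integral_lborel[of t K f] \<open>t > 0\<close> unfolding F_def by simp
qed

lemma integral_Qf_invariant:
  assumes "invariant_prob K \<mu>" "bcont f" "t > 0"
  shows "(\<integral>y. Qf K t f y \<partial>\<mu>) = (\<integral>y. f y \<partial>\<mu>)"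
proof -
  obtain B where B: "\<And>y. \<bar>f y\<bar> \<le> B" using bcont_abs_bound[OF assms(2)] by blast
  have "(\<lambda>s. indicator {0..t} s * (\<integral>y. Pf K s f y \<partial>\<mu>)) = (\<lambda>s. indicator {0..t} s * (\<integral>y. f y \<partial>\<mu>))"
    using integral_Pf_invariant[OF assms(1) _ bcont_borel_measurable[OF assms(2)] B]
    by (auto split: split_indicator)
  then show ?thesis
    using integral_Qf[OF assms(2,3) invariant_probD(2,1)[OF assms(1)]] \<open>t > 0\<close> by simp
qed

lemma abs_integral_sub_Qf_le:
  assumes "invariant_prob K \<mu>" "bcont f" "t > 0"
  shows "\<bar>(\<integral>y. f y \<partial>\<mu>) - Qf K t f z\<bar> \<le> (\<integral>y. \<bar>Qf K t f y - Qf K t f z\<bar> \<partial>\<mu>)"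
proof -
  note \<mu> = invariant_probD(2,1)[OF assms(1)]
  interpret prob_space \<mu> by (rule \<mu>(1))
  obtain B where B: "\<And>y. \<bar>f y\<bar> \<le> B" using bcont_abs_bound[OF assms(2)] by blast
  have "integrable \<mu> (Qf K t f)"
    using \<open>t > 0\<close>
    by (intro bounded_borel_integrable[OF \<mu> borel_measurable_Qf[OF assms(2)] abs_Qf_le[OF assms(2) B]]) auto
  then have "(\<integral>y. f y \<partial>\<mu>) - Qf K t f z = (\<integral>y. Qf K t f y - Qf K t f z \<partial>\<mu>)"
    using integral_Qf_invariant[OF assms] by (simp add: prob_space)
  also have "\<bar>\<dots>\<bar> \<le> (\<integral>y. \<bar>Qf K t f y - Qf K t f z\<bar> \<partial>\<mu>)"
    using integral_norm_bound[of \<mu> "\<lambda>y. Qf K t f y - Qf K t f z"] by simp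
  finally show ?thesis .
qed

lemma abs_integral_kernel_Qf_diff_le:
  assumes f: "bcont f" "\<And>y. \<bar>f y\<bar> \<le> B" and "s \<ge> 0" "t > 0"
  shows "\<bar>(\<integral>w. Qf K t f w \<partial>K s x) - Qf K t f x\<bar> \<le> 2 * s * B / t"
proof -
  define \<phi> where "\<phi> r = indicator {0..} r * Pf K r f x" for r
  have "(\<lambda>r. indicator {0..t} r * (\<integral>w. Pf K r f w \<partial>K s x)) = (\<lambda>r. indicator {0..t} r * \<phi> (s + r))"
    using integral_kernel_Pf[OF \<open>s \<ge> 0\<close> _ bcont_borel_measurable[OF f(1)] f(2)] \<open>s \<ge> 0\<close>
    unfolding \<phi>_def by (auto split: split_indicator)
  then have "(\<integral>w. Qf K t f w \<partial>K s x) = (1/t) * (\<integral>r. indicator {0..t} r * \<phi> (s + r) \<partial>lborel)"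
    using integral_Qf[OF f(1) \<open>t > 0\<close> prob_space_kernel sets_kernel] \<open>s \<ge> 0\<close> by simp
  moreover have "Qf K t f x = (1/t) * (\<integral>r. indicator {0..t} r * \<phi> r \<partial>lborel)"
    using Qf_eq_integral_lborel[of t K f x] \<open>t > 0\<close> unfolding \<phi>_def by simp
  moreover have "\<bar>(\<integral>r. indicator {0..t} r * \<phi> (s + r) \<partial>lborel) - (\<integral>r. indicator {0..t} r * \<phi> r \<partial>lborel)\<bar>
      \<le> 2 * s * B"
    unfolding \<phi>_def using \<open>s \<ge> 0\<close> \<open>t > 0\<close>
    by (intro abs_integral_shift_diff_le Pf_time_measurable abs_indicator_Pf_le f) auto
  ultimately show ?thesis
    using \<open>t > 0\<close> by (simp add: abs_mult divide_le_eq diff_divide_distrib[symmetric] mult.commute)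
qed

section \<open>Subharmonic functions under an ergodic measure\<close>

lemma AE_Pf_eq_if_subharmonic:
  fixes g :: "'a \<Rightarrow> real"
  assumes "invariant_prob K \<mu>" "t \<ge> 0" "g \<in> borel_measurable borel" "\<And>y. \<bar>g y\<bar> \<le> B"
    and "\<And>y. g y \<le> Pf K t g y"
  shows "AE y in \<mu>. Pf K t g y = g y"
proof -
  note \<mu> = invariant_probD(2,1)[OF assms(1)]
  interpret prob_space \<mu> by (rule \<mu>(1))
  have "AE y in \<mu>. g y = Pf K t g y"
  proof (rule integral_eq_mono_AE_eq_AE)
    show "integrable \<mu> g" by (rule bounded_borel_integrable[OF \<mu> assms(3,4)])
    show "integrable \<mu> (Pf K t g)"
      by (rule bounded_borel_integrable[OF \<mu> borel_measurable_Pf abs_Pf_le]) (use assms in auto)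
    show "(\<integral>y. g y \<partial>\<mu>) = (\<integral>y. Pf K t g y \<partial>\<mu>)"
      by (rule integral_Pf_invariant[symmetric]) (use assms in auto)
  qed (use assms(5) in simp)
  then show ?thesis by auto
qed

lemma subharmonic_pos_part:
  fixes g :: "'a \<Rightarrow> real"
  assumes "t \<ge> 0" "g \<in> borel_measurable borel" "\<And>y. \<bar>g y\<bar> \<le> B" "\<And>y. g y \<le> Pf K t g y"
  shows "max (g x - c) 0 \<le> Pf K t (\<lambda>y. max (g y - c) 0) x"
proof -
  interpret prob_space "K t x" by (rule prob_space_kernel[OF assms(1)])
  have int_g: "integrable (K t x) g" by (rule integrable_kernel[OF assms(1-3)])
  have "\<bar>max (g y - c) 0\<bar> \<le> B + \<bar>c\<bar>" for y using assms(3)[of y] by (auto simp: abs_le_iff)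
  then have int_pos: "integrable (K t x) (\<lambda>y. max (g y - c) 0)"
    using assms(2) by (intro integrable_kernel[OF assms(1)]) auto
  have "g x - c \<le> (\<integral>y. g y - c \<partial>K t x)"
    using assms(4)[of x] int_g by (simp add: Pf_def prob_space)
  also have "\<dots> \<le> Pf K t (\<lambda>y. max (g y - c) 0) x"
    unfolding Pf_def using int_g int_pos by (intro integral_mono) auto
  finally show ?thesis by (simp add: Pf_def)
qed

lemma AE_Pf_indicator_positivity_set:
  fixes g :: "'a \<Rightarrow> real"
  assumes "invariant_prob K \<mu>" "t \<ge> 0" "g \<in> borel_measurable borel" "\<And>y. 0 \<le> g y" "\<And>y. g y \<le> B"
    and "\<And>y. g y \<le> Pf K t g y"
  defines "A \<equiv> {y. 0 < g y}"
  shows "AE y in \<mu>. Pf K t (indicator A) y = indicator A y"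
proof -
  note \<mu> = invariant_probD(2,1)[OF assms(1)]
  interpret prob_space \<mu> by (rule \<mu>(1))
  have g_bound: "\<bar>g y\<bar> \<le> B" for y using assms(4,5)[of y] by simp
  have A_borel: "A \<in> sets borel" unfolding A_def using assms(3) by measurable
  have indicator_bound: "\<bar>indicator A y :: real\<bar> \<le> 1" for y by (simp split: split_indicator)
  have vanish: "Pf K t (indicator A) y = 0" if "Pf K t g y = g y" "y \<notin> A" for y
  proof -
    have "(\<integral>w. g w \<partial>K t y) = 0" using that assms(4)[of y] by (simp add: A_def Pf_def)
    then have "AE w in K t y. g w = 0"
      using integral_nonneg_eq_0_iff_AE[OF integrable_kernel[OF assms(2,3) g_bound]] assms(4) by simp
    then have "AE w in K t y. indicator A w = (0::real)"
      by (rule AE_mp) (simp add: A_def)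
    then show ?thesis unfolding Pf_def by (rule integral_eq_zero_AE)
  qed
  show ?thesis
  proof (rule integral_eq_mono_AE_eq_AE)
    show "integrable \<mu> (Pf K t (indicator A))"
      using A_borel assms(2)
      by (intro bounded_borel_integrable[OF \<mu> borel_measurable_Pf abs_Pf_le] indicator_bound) auto
    show "integrable \<mu> (indicator A :: 'a \<Rightarrow> real)"
      using A_borel by (intro bounded_borel_integrable[OF \<mu> _ indicator_bound]) auto
    show "(\<integral>y. Pf K t (indicator A) y \<partial>\<mu>) = (\<integral>y. indicator A y \<partial>\<mu>)"
      using A_borel by (intro integral_Pf_invariant[OF assms(1,2) _ indicator_bound]) auto
    show "AE y in \<mu>. Pf K t (indicator A) y \<le> indicator A y"
      using AE_Pf_eq_if_subharmonic[OF assms(1-3) g_bound assms(6)]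
    proof eventually_elim
      case (elim y)
      have "Pf K t (indicator A) y \<le> 1"
        using abs_Pf_le[of t "indicator A" 1 y] assms(2) A_borel by (auto split: split_indicator)
      then show ?case using vanish[OF elim] by (cases "y \<in> A") auto
    qed
  qed
qed

lemma ergodic_AE_subharmonic_eq_0:
  fixes g :: "'a \<Rightarrow> real"
  assumes \<mu>: "ergodic K \<mu>" "z \<in> supp \<mu>"
    and "d > 0" "\<And>y. y \<in> ball z d \<Longrightarrow> g y = 0"
    and "g \<in> borel_measurable borel" "\<And>y. 0 \<le> g y" "\<And>y. g y \<le> B"
    and "\<And>t y. t \<ge> 0 \<Longrightarrow> g y \<le> Pf K t g y"
  shows "AE y in \<mu>. g y = 0"
proof -
  define A where "A = {y. 0 < g y}"
  note invariant = ergodic_imp_invariant_prob[OF \<mu>(1)]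
  interpret prob_space \<mu> by (rule invariant_probD(2)[OF invariant])
  have sets_\<mu>: "sets \<mu> = sets borel" by (rule invariant_probD(1)[OF invariant])
  have A_borel: "A \<in> sets borel" unfolding A_def using assms(5) by measurable
  have "measure \<mu> A = 0 \<or> measure \<mu> A = 1"
    using \<mu>(1) A_borel AE_Pf_indicator_positivity_set[OF invariant _ assms(5-7) assms(8)]
    unfolding ergodic_def A_def by blast
  moreover have "measure \<mu> A \<noteq> 1"
  proof -
    have "A \<inter> ball z d = {}" using assms(4) by (auto simp: A_def)
    then have "measure \<mu> (A \<union> ball z d) = measure \<mu> A + measure \<mu> (ball z d)"
      using A_borel sets_\<mu> by (intro finite_measure_Union) auto
    moreover have "measure \<mu> (ball z d) > 0"
      using \<mu>(2) \<open>d > 0\<close> by (simp add: supp_def emeasure_eq_measure)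
    ultimately show ?thesis using prob_le_1[of "A \<union> ball z d"] by linarith
  qed
  ultimately have "emeasure \<mu> A = 0" by (simp add: emeasure_eq_measure)
  then have "AE y in \<mu>. y \<notin> A"
    using A_borel sets_\<mu> by (intro AE_iff_measurable[THEN iffD2, of A]) (auto simp: sets_eq_imp_space_eq)
  then show ?thesis by (rule AE_mp) (use assms(6) in \<open>auto simp: A_def antisym\<close>)
qed

end

section \<open>The Cesaro oscillation\<close>

text \<open>The oscillation is taken along integer times and in \<^typ>\<open>ennreal\<close>, so that the reverse Fatou
  lemma \<open>nn_integral_limsup\<close> applies to it.\<close>
definition cesaro_osc :: "(real \<Rightarrow> 'a::topological_space \<Rightarrow> 'a measure) \<Rightarrow> ('a \<Rightarrow> real) \<Rightarrow> 'a \<Rightarrow> 'a \<Rightarrow> real"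
  where "cesaro_osc K f z y = enn2real (limsup (\<lambda>n. ennreal \<bar>Qf K (real n) f y - Qf K (real n) f z\<bar>))"

context markov_feller_semigroup
begin

lemma abs_cesaro_diff_le:
  assumes "bcont f" "\<And>y. \<bar>f y\<bar> \<le> B" "t \<ge> 0"
  shows "\<bar>Qf K t f y - Qf K t f z\<bar> \<le> 2 * B"
  using abs_Qf_le[OF assms, of y] abs_Qf_le[OF assms, of z] by simp

lemma borel_measurable_cesaro_diff:
  assumes "bcont f" "t \<ge> 0"
  shows "(\<lambda>y. \<bar>Qf K t f y - Qf K t f z\<bar>) \<in> borel_measurable borel"
  using borel_measurable_Qf[OF assms] by measurable

lemma limsup_cesaro_diff_le:
  assumes "bcont f" "\<And>y. \<bar>f y\<bar> \<le> B"
  shows "limsup (\<lambda>n. ennreal \<bar>Qf K (real n) f y - Qf K (real n) f z\<bar>) \<le> ennreal (2 * B)"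
proof (rule Limsup_bounded[OF always_eventually], rule allI, rule ennreal_leI)
  show "\<bar>Qf K (real n) f y - Qf K (real n) f z\<bar> \<le> 2 * B" for n
    by (rule abs_cesaro_diff_le[OF assms]) simp
qed

lemma ennreal_cesaro_osc:
  assumes "bcont f"
  shows "ennreal (cesaro_osc K f z y) = limsup (\<lambda>n. ennreal \<bar>Qf K (real n) f y - Qf K (real n) f z\<bar>)"
proof -
  obtain B where "\<And>y. \<bar>f y\<bar> \<le> B" using bcont_abs_bound[OF assms] by blast
  then have "limsup (\<lambda>n. ennreal \<bar>Qf K (real n) f y - Qf K (real n) f z\<bar>) < \<top>"
    using limsup_cesaro_diff_le[OF assms] by (meson ennreal_less_top le_less_trans)
  then show ?thesis by (simp add: cesaro_osc_def less_top)
qed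

lemma cesaro_osc_nonneg: "0 \<le> cesaro_osc K f z y"
  by (simp add: cesaro_osc_def)

lemma cesaro_osc_le:
  assumes "bcont f" "\<And>y. \<bar>f y\<bar> \<le> B"
  shows "cesaro_osc K f z y \<le> 2 * B"
  using limsup_cesaro_diff_le[OF assms, of y z] assms(2)[of y]
  by (simp add: ennreal_cesaro_osc[OF assms(1), symmetric])

lemma borel_measurable_cesaro_osc:
  assumes "bcont f"
  shows "cesaro_osc K f z \<in> borel_measurable borel"
  using borel_measurable_Qf[OF assms] unfolding cesaro_osc_def by measurable

lemma cesaro_osc_le_near:
  assumes "cesaro_ev_cont K z" "bounded_lipschitz f" "c > 0"
  obtains d where "d > 0" "\<And>y. y \<in> ball z d \<Longrightarrow> cesaro_osc K f z y \<le> c"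
proof -
  obtain d where "d > 0" and d: "\<And>y. dist y z < d \<Longrightarrow>
      Limsup at_top (\<lambda>t. ereal \<bar>Qf K t f y - Qf K t f z\<bar>) \<le> ereal (c/2)"
    using assms unfolding cesaro_ev_cont_def by (meson half_gt_zero)
  have "cesaro_osc K f z y \<le> c" if "y \<in> ball z d" for y
  proof -
    have "Limsup at_top (\<lambda>t. ereal \<bar>Qf K t f y - Qf K t f z\<bar>) < ereal c"
      using d[of y] that \<open>c > 0\<close> by (simp add: dist_commute le_less_trans)
    then have "eventually (\<lambda>t. ereal \<bar>Qf K t f y - Qf K t f z\<bar> < ereal c) at_top"
      by (rule Limsup_lessD)
    then have "eventually (\<lambda>n. ereal \<bar>Qf K (real n) f y - Qf K (real n) f z\<bar> < ereal c) sequentially"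
      by (rule eventually_compose_filterlim[OF _ filterlim_real_sequentially])
    then have "eventually (\<lambda>n. ennreal \<bar>Qf K (real n) f y - Qf K (real n) f z\<bar> \<le> ennreal c) sequentially"
      by eventually_elim auto
    then have "limsup (\<lambda>n. ennreal \<bar>Qf K (real n) f y - Qf K (real n) f z\<bar>) \<le> ennreal c"
      by (rule Limsup_bounded)
    then show ?thesis
      using \<open>c > 0\<close> by (simp add: ennreal_cesaro_osc[OF bounded_lipschitz_imp_bcont[OF assms(2)], symmetric])
  qed
  then show ?thesis using \<open>d > 0\<close> that by blast
qed

lemma cesaro_diff_le_integral_kernel:
  assumes f: "bcont f" "\<And>y. \<bar>f y\<bar> \<le> B" and "s \<ge> 0" "t > 0"
  shows "\<bar>Qf K t f x - Qf K t f z\<bar> \<le> (\<integral>w. \<bar>Qf K t f w - Qf K t f z\<bar> \<partial>K s x) + 2 * s * B / t"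
proof -
  interpret prob_space "K s x" by (rule prob_space_kernel[OF \<open>s \<ge> 0\<close>])
  have "integrable (K s x) (Qf K t f)"
    using \<open>t > 0\<close> by (intro integrable_kernel[OF \<open>s \<ge> 0\<close> borel_measurable_Qf[OF f(1)] abs_Qf_le[OF f]]) auto
  then have "(\<integral>w. Qf K t f w \<partial>K s x) - Qf K t f z = (\<integral>w. Qf K t f w - Qf K t f z \<partial>K s x)"
    by (simp add: prob_space)
  also have "\<bar>\<dots>\<bar> \<le> (\<integral>w. \<bar>Qf K t f w - Qf K t f z\<bar> \<partial>K s x)"
    using integral_norm_bound[of "K s x" "\<lambda>w. Qf K t f w - Qf K t f z"] by simp
  finally show ?thesis
    using abs_integral_kernel_Qf_diff_le[OF f \<open>s \<ge> 0\<close> \<open>t > 0\<close>, of x] by linarith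
qed

lemma cesaro_osc_le_limsup_integral_kernel:
  assumes f: "bcont f" and "s \<ge> 0"
  shows "ennreal (cesaro_osc K f z x)
    \<le> limsup (\<lambda>n. \<integral>\<^sup>+w. ennreal \<bar>Qf K (real n) f w - Qf K (real n) f z\<bar> \<partial>K s x)"
proof (rule ennreal_le_epsilon)
  fix e :: real assume "0 < e"
  obtain B where B: "\<And>y. \<bar>f y\<bar> \<le> B" using bcont_abs_bound[OF f] by blast
  define u where "u n w = \<bar>Qf K (real n) f w - Qf K (real n) f z\<bar>" for n w
  define V where "V n = (\<integral>\<^sup>+w. ennreal (u n w) \<partial>K s x)" for n
  have u_bound: "\<bar>u n w\<bar> \<le> 2 * B" for n w
    using abs_cesaro_diff_le[OF f B] by (simp add: u_def)
  have V_eq: "V n = ennreal (\<integral>w. u n w \<partial>K s x)" for n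
    unfolding V_def using borel_measurable_cesaro_diff[OF f] u_bound
    by (intro nn_integral_eq_integral integrable_kernel[OF \<open>s \<ge> 0\<close>]) (auto simp: u_def)
  have "(\<lambda>n. 2 * s * B / real n) \<longlonglongrightarrow> 0" by (rule lim_const_over_n)
  then have "eventually (\<lambda>n. 2 * s * B / real n < e) sequentially"
    using \<open>0 < e\<close> by (rule order_tendstoD(2))
  then have "eventually (\<lambda>n. ennreal (u n x) \<le> ennreal e + V n) sequentially"
    using eventually_gt_at_top[of 0]
  proof eventually_elim
    case (elim n)
    then have "u n x \<le> e + (\<integral>w. u n w \<partial>K s x)"
      using cesaro_diff_le_integral_kernel[OF f B \<open>s \<ge> 0\<close>, of "real n" x z] unfolding u_def by simp
    then have "ennreal (u n x) \<le> ennreal (e + (\<integral>w. u n w \<partial>K s x))" by (rule ennreal_leI)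
    also have "\<dots> = ennreal e + V n"
      unfolding V_eq using \<open>0 < e\<close> by (intro ennreal_plus) (simp_all add: u_def)
    finally show ?case .
  qed
  then have "limsup (\<lambda>n. ennreal (u n x)) \<le> limsup (\<lambda>n. ennreal e + V n)" by (rule Limsup_mono)
  also have "\<dots> = ennreal e + limsup V" by (rule Limsup_const_add) simp
  finally show "ennreal (cesaro_osc K f z x) \<le> limsup (\<lambda>n. \<integral>\<^sup>+w. ennreal (u n w) \<partial>K s x) + ennreal e"
    by (simp add: ennreal_cesaro_osc[OF f] u_def V_def[abs_def] add.commute)
qed

lemma cesaro_osc_subharmonic:
  assumes f: "bcont f" and "s \<ge> 0"
  shows "cesaro_osc K f z x \<le> Pf K s (cesaro_osc K f z) x"
proof -
  obtain B where B: "\<And>y. \<bar>f y\<bar> \<le> B" using bcont_abs_bound[OF f] by blast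
  note ennreal_cesaro_osc_le = cesaro_osc_le_limsup_integral_kernel[OF f \<open>s \<ge> 0\<close>, of z x]
  also have "limsup (\<lambda>n. \<integral>\<^sup>+w. ennreal \<bar>Qf K (real n) f w - Qf K (real n) f z\<bar> \<partial>K s x)
      \<le> (\<integral>\<^sup>+w. ennreal (cesaro_osc K f z w) \<partial>K s x)"
    unfolding ennreal_cesaro_osc[OF f]
  proof (rule nn_integral_limsup[where w="\<lambda>_. ennreal (2 * B)"])
    show "(\<lambda>w. ennreal \<bar>Qf K (real n) f w - Qf K (real n) f z\<bar>) \<in> borel_measurable (K s x)" for n
      using borel_measurable_cesaro_diff[OF f] sets_kernel[OF \<open>s \<ge> 0\<close>] by (simp add: measurable_sets_borel)
    show "AE w in K s x. ennreal \<bar>Qf K (real n) f w - Qf K (real n) f z\<bar> \<le> ennreal (2 * B)" for n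
      using abs_cesaro_diff_le[OF f B] by (intro AE_I2 ennreal_leI) simp
    show "(\<integral>\<^sup>+w. ennreal (2 * B) \<partial>K s x) < \<infinity>"
      using prob_space.emeasure_space_1[OF prob_space_kernel[OF \<open>s \<ge> 0\<close>]] by simp
  qed simp
  also have "(\<integral>\<^sup>+w. ennreal (cesaro_osc K f z w) \<partial>K s x) = ennreal (Pf K s (cesaro_osc K f z) x)"
    unfolding Pf_def using cesaro_osc_nonneg cesaro_osc_le[OF f B]
    by (intro nn_integral_eq_integral integrable_kernel[OF \<open>s \<ge> 0\<close> borel_measurable_cesaro_osc[OF f], where B="2 * B"])
      (auto simp: abs_le_iff)
  finally show ?thesis by (simp add: Pf_def cesaro_osc_nonneg)
qed

lemma AE_cesaro_osc_eq_0:
  assumes \<mu>: "ergodic K \<mu>" "z \<in> supp \<mu>" and "cesaro_ev_cont K z" "bounded_lipschitz f"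
  shows "AE y in \<mu>. cesaro_osc K f z y = 0"
proof -
  have f: "bcont f" by (rule bounded_lipschitz_imp_bcont[OF assms(4)])
  obtain B where B: "\<And>y. \<bar>f y\<bar> \<le> B" using bcont_abs_bound[OF f] by blast
  have osc_bound: "\<bar>cesaro_osc K f z y\<bar> \<le> 2 * B" for y
    using cesaro_osc_nonneg cesaro_osc_le[OF f B] by (simp add: abs_le_iff)
  have AE_le: "AE y in \<mu>. cesaro_osc K f z y \<le> c" if "c > 0" for c
  proof -
    obtain d where "d > 0" and near: "\<And>y. y \<in> ball z d \<Longrightarrow> cesaro_osc K f z y \<le> c"
      using cesaro_osc_le_near[OF assms(3,4) \<open>c > 0\<close>] by blast
    have "AE y in \<mu>. max (cesaro_osc K f z y - c) 0 = 0"
    proof (rule ergodic_AE_subharmonic_eq_0[OF \<mu> \<open>d > 0\<close>])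
      show "max (cesaro_osc K f z y - c) 0 = 0" if "y \<in> ball z d" for y
        using near[OF that] by simp
      show "(\<lambda>y. max (cesaro_osc K f z y - c) 0) \<in> borel_measurable borel"
        using borel_measurable_cesaro_osc[OF f] by measurable
      show "max (cesaro_osc K f z y - c) 0 \<le> 2 * B" for y
        using osc_bound[of y] \<open>c > 0\<close> by auto
      show "max (cesaro_osc K f z y - c) 0 \<le> Pf K t (\<lambda>y. max (cesaro_osc K f z y - c) 0) y"
        if "t \<ge> 0" for t y
        using subharmonic_pos_part[OF that borel_measurable_cesaro_osc[OF f] osc_bound
            cesaro_osc_subharmonic[OF f that]] .
    qed simp
    then show ?thesis by (rule AE_mp) auto
  qed
  have "AE y in \<mu>. cesaro_osc K f z y \<le> 0" by (rule AE_le_0_if_AE_le_pos) (rule AE_le)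
  then show ?thesis by eventually_elim (simp add: antisym cesaro_osc_nonneg)
qed

lemma Qf_tendsto_integral:
  assumes \<mu>: "ergodic K \<mu>" "z \<in> supp \<mu>" and "cesaro_ev_cont K z" "bounded_lipschitz f"
  shows "(\<lambda>n. Qf K (real n) f z) \<longlonglongrightarrow> (\<integral>y. f y \<partial>\<mu>)"
proof -
  note invariant = ergodic_imp_invariant_prob[OF \<mu>(1)]
  interpret prob_space \<mu> by (rule invariant_probD(2)[OF invariant])
  have f: "bcont f" by (rule bounded_lipschitz_imp_bcont[OF assms(4)])
  obtain B where B: "\<And>y. \<bar>f y\<bar> \<le> B" using bcont_abs_bound[OF f] by blast
  define u where "u n y = \<bar>Qf K (real n) f y - Qf K (real n) f z\<bar>" for n y
  have u_bound: "0 \<le> u n y" "u n y \<le> 2 * B" for n y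
    using abs_cesaro_diff_le[OF f B] by (auto simp: u_def)
  have AE_u_tendsto: "AE y in \<mu>. (\<lambda>n. u n y) \<longlonglongrightarrow> 0"
    using AE_cesaro_osc_eq_0[OF assms]
  proof eventually_elim
    case (elim y)
    then have "limsup (\<lambda>n. ennreal (u n y)) = 0"
      by (simp add: u_def ennreal_cesaro_osc[OF f, symmetric])
    then have "(\<lambda>n. ennreal (u n y)) \<longlonglongrightarrow> ennreal 0"
      using tendsto_0_if_Limsup_eq_0_ennreal by simp
    then show ?case by (rule tendsto_ennrealD) (auto simp: u_bound)
  qed
  have integral_u_tendsto: "(\<lambda>n. \<integral>y. u n y \<partial>\<mu>) \<longlonglongrightarrow> (\<integral>y. 0 \<partial>\<mu>)"
  proof (rule integral_dominated_convergence[where w="\<lambda>_. 2 * B"])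
    show "u n \<in> borel_measurable \<mu>" for n
      unfolding u_def
      by (rule measurable_sets_borel[OF invariant_probD(1)[OF invariant] borel_measurable_cesaro_diff[OF f]]) simp
    show "AE y in \<mu>. norm (u n y) \<le> 2 * B" for n using u_bound by (intro AE_I2) simp
  qed (simp_all add: AE_u_tendsto)
  have "eventually (\<lambda>n. norm ((\<integral>y. f y \<partial>\<mu>) - Qf K (real n) f z) \<le> (\<integral>y. u n y \<partial>\<mu>)) sequentially"
    using eventually_gt_at_top[of 0]
    by eventually_elim (simp add: u_def abs_integral_sub_Qf_le[OF invariant f])
  from Lim_null_comparison[OF this] integral_u_tendsto
  have "(\<lambda>n. (\<integral>y. f y \<partial>\<mu>) - ((\<integral>y. f y \<partial>\<mu>) - Qf K (real n) f z)) \<longlonglongrightarrow> (\<integral>y. f y \<partial>\<mu>) - 0"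
    by (intro tendsto_diff tendsto_const) simp
  then show ?thesis by simp
qed

end

theorem corollary3p7:
  fixes K :: "real \<Rightarrow> 'a::polish_space \<Rightarrow> 'a measure"
    and \<mu> \<nu> :: "'a measure"
  assumes "markov_feller K"
    and "\<forall>z. cesaro_ev_cont K z"
    and "ergodic K \<mu>" and "ergodic K \<nu>" and "\<mu> \<noteq> \<nu>"
  shows "supp \<mu> \<inter> supp \<nu> = {}"
proof -
  interpret markov_feller_semigroup K by unfold_locales fact
  have "\<mu> = \<nu>" if "z \<in> supp \<mu>" "z \<in> supp \<nu>" for z
  proof (rule measure_eq_if_integral_bounded_lipschitz_eq)
    show "sets \<mu> = sets borel" "prob_space \<mu>" "sets \<nu> = sets borel" "prob_space \<nu>"
      using invariant_probD ergodic_imp_invariant_prob assms(3,4) by blast+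
    have "cesaro_ev_cont K z" using assms(2) by blast
    then show "(\<integral>x. f x \<partial>\<mu>) = (\<integral>x. f x \<partial>\<nu>)" if "bounded_lipschitz f" for f
      using LIMSEQ_unique[OF Qf_tendsto_integral[OF assms(3) \<open>z \<in> supp \<mu>\<close> _ that]
          Qf_tendsto_integral[OF assms(4) \<open>z \<in> supp \<nu>\<close> _ that]] by blast
  qed
  then show ?thesis using assms(5) by blast
qed

end
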